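(* Let $\mathcal S=\{\|\cdot\|_t;\ t\ge1\}$ be a family of norms on $\mathbb R^d$ and let $\mathcal S'=\{\|\cdot\|_n;\ n\in\mathbb N\}$. Assume that there exist $K,a>0$ such that $$\|T(t,s)x\|_t\le K\Big(\frac ts\Big)^a\|x\|_s\quad\text{and}\quad \|T(s,t)x\|_s\le K\Big(\frac ts\Big)^a\|x\|_t\qquad\text{for all } t\ge s\ge1,\ x\in\mathbb R^d.$$ Then $$\Sigma_{PD,A(\cdot),\mathcal S}=\Sigma_{PD,\mathbb A,\mathcal S'},$$ where $\mathbb A=(A_n)_{n\in\mathbb N}$ is given by $A_n=T(n+1,n)$. In particular, $$\Sigma_{PD,A(\cdot),\mathcal S}=\bigcup_{i=1}^r\Big[\frac{\log a_i}{\log 2},\frac{\log b_i}{\log 2}\Big]$$ for some $1\le r\le d$ and $0<a_1\le b_1<a_2\le\dots<a_r\le b_r$.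
   Context: $A\colon[1,\infty)\to\mathbb R^{d\times d}$ is continuous and $T(t,s)$ denotes the evolution family of $x'=A(t)x$, $t\ge1$. The equation admits a strong polynomial dichotomy with respect to $\mathcal S$ if there exist $K>0$, $a\ge\lambda>0$ and projections $P(t)$ with $P(t)T(t,s)=T(t,s)P(s)$ and, for $t\ge s\ge1$, $\|T(t,s)P(s)x\|_t\le K(t/s)^{-\lambda}\|x\|_s$, $\|T(s,t)(\mathrm{Id}-P(t))x\|_s\le K(t/s)^{-\lambda}\|x\|_t$, together with the two bounded-growth estimates above. $\Sigma_{PD,A(\cdot),\mathcal S}$ is the set of $\tau\in\mathbb R$ for which $x'=(A(t)-\frac{\tau}{t}\mathrm{Id})x$ does not admit a strong polynomial dichotomy with respect to $\mathcal S$. For a sequence $\mathbb A=(A_n)_{n\in\mathbb N}$ of invertible operators with $\mathcal A(m,n)=A_{m-1}\cdots A_n$ ($m>n$), $\mathcal A(n,n)=\mathrm{Id}$, $\mathcal A(m,n)=A_m^{-1}\cdots A_{n-1}^{-1}$ ($m<n$), a strong polynomial dichotomy with respect to $\{\|\cdot\|_n\}$ means projections $P_n$ with $A_nP_n=P_{n+1}A_n$ and, for $m\ge n$, $\|\mathcal A(m,n)P_nx\|_m\le K(m/n)^{-\lambda}\|x\|_n$, $\|\mathcal A(n,m)(\mathrm{Id}-P_m)x\|_n\le K(m/n)^{-\lambda}\|x\|_m$, $\|\mathcal A(m,n)x\|_m\le K(m/n)^a\|x\|_n$, $\|\mathcal A(n,m)x\|_n\le K(m/n)^a\|x\|_m$;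 and $\Sigma_{PD,\mathbb A,\mathcal S'}$ is the set of $\tau\in\mathbb R$ such that $\big((\frac{n+1}{n})^{-\tau}A_n\big)_{n\in\mathbb N}$ does not admit a strong polynomial dichotomy with respect to $\mathcal S'$. *)

theory Defs
  imports "HOL-Analysis.Analysis"
begin

definition is_norm :: "(real^'d \<Rightarrow> real) \<Rightarrow> bool" where
  "is_norm nf \<longleftrightarrow>
     (\<forall>x. nf x = 0 \<longleftrightarrow> x = 0) \<and>
     (\<forall>c x. nf (c *\<^sub>R x) = \<bar>c\<bar> * nf x) \<and>
     (\<forall>x y. nf (x + y) \<le> nf x + nf y)"

definition evol_family :: "(real \<Rightarrow> real^'d^'d) \<Rightarrow> (real \<Rightarrow> real \<Rightarrow> real^'d^'d) \<Rightarrow> bool" where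
  "evol_family B T \<longleftrightarrow>
     (\<forall>s\<ge>1. T s s = mat 1 \<and>
        (\<forall>t\<ge>1. ((\<lambda>u. T u s) has_vector_derivative (B t ** T t s)) (at t within {1..})))"

definition spd_family :: "(real \<Rightarrow> real \<Rightarrow> real^'d^'d) \<Rightarrow> (real \<Rightarrow> real^'d \<Rightarrow> real) \<Rightarrow> bool" where
  "spd_family T N \<longleftrightarrow>
     (\<exists>P :: real \<Rightarrow> real^'d^'d. \<exists>K lam a :: real. K > 0 \<and> 0 < lam \<and> lam \<le> a \<and>
        (\<forall>t\<ge>1. P t ** P t = P t) \<and>
        (\<forall>t\<ge>1. \<forall>s\<ge>1. P t ** T t s = T t s ** P s) \<and>
        (\<forall>t s x. 1 \<le> s \<and> s \<le> t \<longrightarrow>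
           N t (T t s *v (P s *v x)) \<le> K * (t / s) powr (- lam) * N s x \<and>
           N s (T s t *v ((mat 1 - P t) *v x)) \<le> K * (t / s) powr (- lam) * N t x \<and>
           N t (T t s *v x) \<le> K * (t / s) powr a * N s x \<and>
           N s (T s t *v x) \<le> K * (t / s) powr a * N t x))"

text \<open>The equation x' = B(t) x admits a strong polynomial dichotomy (w.r.t. N)
  (its evolution family is unique, so "some" = "the").\<close>
definition ode_spd :: "(real \<Rightarrow> real^'d^'d) \<Rightarrow> (real \<Rightarrow> real^'d \<Rightarrow> real) \<Rightarrow> bool" where
  "ode_spd B N \<longleftrightarrow> (\<exists>T. evol_family B T \<and> spd_family T N)"

definition ode_spectrum :: "(real \<Rightarrow> real^'d^'d) \<Rightarrow> (real \<Rightarrow> real^'d \<Rightarrow> real) \<Rightarrow> real set" where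
  "ode_spectrum A N = {\<tau>. \<not> ode_spd (\<lambda>t. A t - (\<tau> / t) *\<^sub>R mat 1) N}"

text \<open>Discrete cocycle: fwd As n k = A_(n+k-1) ... A_n, bwd As m k = A_m^-1 ... A_(m+k-1)^-1.\<close>
fun fwd :: "(nat \<Rightarrow> real^'d^'d) \<Rightarrow> nat \<Rightarrow> nat \<Rightarrow> real^'d^'d" where
  "fwd As n 0 = mat 1"
| "fwd As n (Suc k) = As (n + k) ** fwd As n k"

fun bwd :: "(nat \<Rightarrow> real^'d^'d) \<Rightarrow> nat \<Rightarrow> nat \<Rightarrow> real^'d^'d" where
  "bwd As m 0 = mat 1"
| "bwd As m (Suc k) = bwd As m k ** matrix_inv (As (m + k))"

definition cocycle :: "(nat \<Rightarrow> real^'d^'d) \<Rightarrow> nat \<Rightarrow> nat \<Rightarrow> real^'d^'d" where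
  "cocycle As m n = (if n \<le> m then fwd As n (m - n) else bwd As m (n - m))"

definition seq_spd :: "(nat \<Rightarrow> real^'d^'d) \<Rightarrow> (nat \<Rightarrow> real^'d \<Rightarrow> real) \<Rightarrow> bool" where
  "seq_spd As N \<longleftrightarrow>
     (\<exists>P :: nat \<Rightarrow> real^'d^'d. \<exists>K lam a :: real. K > 0 \<and> 0 < lam \<and> lam \<le> a \<and>
        (\<forall>n\<ge>1. P n ** P n = P n \<and> As n ** P n = P (Suc n) ** As n) \<and>
        (\<forall>m n x. 1 \<le> n \<and> n \<le> m \<longrightarrow>
           N m (cocycle As m n *v (P n *v x)) \<le> K * (real m / real n) powr (- lam) * N n x \<and>
           N n (cocycle As n m *v ((mat 1 - P m) *v x)) \<le> K * (real m / real n) powr (- lam) * N m x \<and>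
           N m (cocycle As m n *v x) \<le> K * (real m / real n) powr a * N n x \<and>
           N n (cocycle As n m *v x) \<le> K * (real m / real n) powr a * N m x))"

definition seq_spectrum :: "(nat \<Rightarrow> real^'d^'d) \<Rightarrow> (nat \<Rightarrow> real^'d \<Rightarrow> real) \<Rightarrow> real set" where
  "seq_spectrum As N = {\<tau>. \<not> seq_spd (\<lambda>n. ((real n + 1) / real n) powr (- \<tau>) *\<^sub>R As n) N}"

end

theory Submission
  imports Defs
begin

text \<open>
  Multiplying \<open>T(t,s)\<close> by \<open>(t/s) powr (-\<tau>)\<close> gives the evolution family of
  \<open>x' = (A(t) - \<tau>/t) x\<close>, so \<open>\<tau>\<close> lies in the resolvent iff this rescaled family has a strong
  polynomial dichotomy. The bounded growth of \<open>T\<close> carries over to every rescaled family. This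
  makes the growth half of a dichotomy automatic and lets dichotomies move between real and
  integer times: at integer times the rescaled family is generated by \<open>((n+1)/n) powr (-\<tau>) A\<^sub>n\<close>,
  and conversely projections at integer times are transported from \<open>\<lfloor>t\<rfloor>\<close> to \<open>t\<close> at a bounded
  cost. Hence the two spectra coincide.

  For their shape, consider the space of initial values whose rescaled orbits are bounded; under a
  dichotomy it is the range of \<open>P(1)\<close>. Its dimension is nondecreasing in \<open>\<tau>\<close>, equal to \<open>0\<close>
  below \<open>-a\<close> and to \<open>d\<close> above \<open>a\<close>, and locally constant on the resolvent, because a dichotomy
  survives small changes of \<open>\<tau>\<close> with the same projections. Moreover two resolvent points with the
  same dimension enclose only resolvent points. So the resolvent consists of at most \<open>d + 1\<close> open
  intervals of constant dimension, and the spectrum of the at most \<open>d\<close> closed gaps between them.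
\<close>

section \<open>Norms and matrices\<close>

lemma is_norm_zero: "is_norm nf \<Longrightarrow> nf 0 = 0"
  unfolding is_norm_def by simp

lemma is_norm_scaleR: "is_norm nf \<Longrightarrow> nf (c *\<^sub>R x) = \<bar>c\<bar> * nf x"
  unfolding is_norm_def by simp

lemma is_norm_eq_0: "is_norm nf \<Longrightarrow> nf x = 0 \<longleftrightarrow> x = 0"
  unfolding is_norm_def by simp

lemma is_norm_nonneg:
  assumes "is_norm nf"
  shows "0 \<le> nf x"
proof -
  have "nf 0 \<le> nf x + nf (- x)"
    using assms unfolding is_norm_def by (metis add.right_inverse)
  also have "nf (- x) = nf x"
    using is_norm_scaleR[OF assms, of "-1" x] by simp
  finally show ?thesis
    using is_norm_zero[OF assms] by simp
qed

lemma matrix_diff_ldistrib: "(C::'a::ring_1^'n^'m) ** (A - B) = C ** A - C ** B"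
  by (simp add: matrix_matrix_mult_def vec_eq_iff sum_subtractf algebra_simps)

lemma matrix_diff_rdistrib: "((A::'a::ring_1^'n^'m) - B) ** C = A ** C - B ** C"
  by (simp add: matrix_matrix_mult_def vec_eq_iff sum_subtractf algebra_simps)

lemma bounded_bilinear_matrix_mult:
  "bounded_bilinear ((**) :: real^'n^'m \<Rightarrow> real^'k^'n \<Rightarrow> real^'k^'m)"
proof -
  have "bilinear ((**) :: real^'n^'m \<Rightarrow> real^'k^'n \<Rightarrow> real^'k^'m)"
    unfolding bilinear_def linear_iff
    by (simp add: matrix_matrix_mult_def vec_eq_iff sum.distrib sum_distrib_left algebra_simps)
  then show ?thesis
    by (rule bilinear_conv_bounded_bilinear[THEN iffD1])
qed

lemma matrix_inv_eq:
  fixes A B :: "'a::semiring_1^'n^'n"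
  assumes AB: "A ** B = mat 1" and BA: "B ** A = mat 1"
  shows "matrix_inv A = B"
proof -
  have "A ** matrix_inv A = mat 1 \<and> matrix_inv A ** A = mat 1"
    unfolding matrix_inv_def by (rule someI[of _ B]) (use AB BA in simp)
  then have "matrix_inv A = matrix_inv A ** (A ** B)"
    using AB by simp
  also have "\<dots> = B"
    using \<open>A ** matrix_inv A = mat 1 \<and> matrix_inv A ** A = mat 1\<close> by (simp add: matrix_mul_assoc)
  finally show ?thesis .
qed

lemma matrix_commute_inverse:
  fixes A B P Q :: "'a::semiring_1^'n^'n"
  assumes "A ** B = mat 1" "B ** A = mat 1" "A ** P = Q ** A"
  shows "B ** Q = P ** B"
proof -
  have "B ** Q = B ** Q ** (A ** B)"
    using assms(1) by simp
  also have "\<dots> = B ** (A ** P) ** B"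
    using assms(3) by (simp add: matrix_mul_assoc)
  also have "\<dots> = P ** B"
    using assms(2) by (simp add: matrix_mul_assoc)
  finally show ?thesis .
qed

section \<open>Uniqueness for linear matrix equations\<close>

text \<open>On an interval short enough that \<open>M (q - p) \<le> 1/2\<close>, the mean value inequality bounds
  the maximum of \<open>norm Z\<close> by half of itself.\<close>

lemma linear_ode_zero_short:
  fixes Z B :: "real \<Rightarrow> real^'n^'n"
  assumes der: "\<And>u. u \<in> {p..q} \<Longrightarrow> (Z has_vector_derivative (B u ** Z u)) (at u within {p..q})"
    and C: "\<And>(X::real^'n^'n) (Y::real^'n^'n). norm (X ** Y) \<le> norm X * norm Y * C"
    and M: "\<And>u. u \<in> {p..q} \<Longrightarrow> C * norm (B u) \<le> M" "0 \<le> M" "M * (q - p) \<le> 1/2"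
    and w: "w \<in> {p..q}" "Z w = 0"
    and u: "u \<in> {p..q}"
  shows "Z u = 0"
proof -
  have "continuous_on {p..q} Z"
    by (rule continuous_on_vector_derivative[OF der])
  then obtain u0 where u0: "u0 \<in> {p..q}" and max: "\<And>u. u \<in> {p..q} \<Longrightarrow> norm (Z u) \<le> norm (Z u0)"
    using continuous_attains_sup[of "{p..q}" "\<lambda>u. norm (Z u)"] w by (blast intro: continuous_on_norm)
  let ?m = "norm (Z u0)"
  have "norm (B u ** Z u) \<le> M * ?m" if "u \<in> {p..q}" for u
  proof -
    have "norm (B u ** Z u) \<le> C * norm (B u) * norm (Z u)"
      using C[of "B u" "Z u"] by (simp add: ac_simps)
    also have "\<dots> \<le> M * ?m"
      using M(1)[OF that] max[OF that] M(2) by (intro mult_mono) auto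
    finally show ?thesis .
  qed
  then have lip: "norm (Z x - Z y) \<le> M * ?m * norm (x - y)" if "x \<in> {p..q}" "y \<in> {p..q}" for x y
    using der that M(2)
    by (intro differentiable_bound[where f' = "\<lambda>u h. h *\<^sub>R (B u ** Z u)", of "{p..q}"])
       (auto simp: has_vector_derivative_def mult.commute intro!: onorm_bound mult_left_mono)
  have "?m \<le> M * ?m * norm (u0 - w)"
    using lip[OF u0 w(1)] w(2) by simp
  also have "\<dots> \<le> M * ?m * (q - p)"
    using u0 w(1) M(2) by (intro mult_left_mono) auto
  also have "\<dots> \<le> ?m / 2"
    using M(3) mult_left_mono[OF M(3), of ?m] by (simp add: mult_ac)
  finally show ?thesis
    using max[OF u] by simp
qed

text \<open>Induction on the number of steps of length \<open>h\<close>: the point \<open>p + h\<close> is a zero, by the short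
  case or by induction according to where \<open>w\<close> lies, and then both pieces vanish.\<close>

lemma linear_ode_zero_interval:
  fixes Z B :: "real \<Rightarrow> real^'n^'n"
  assumes der: "\<And>u. u \<in> {p..q} \<Longrightarrow> (Z has_vector_derivative (B u ** Z u)) (at u within {p..q})"
    and C: "\<And>(X::real^'n^'n) (Y::real^'n^'n). norm (X ** Y) \<le> norm X * norm Y * C"
    and M: "\<And>u. u \<in> {p..q} \<Longrightarrow> C * norm (B u) \<le> M" "0 \<le> M" "M * h \<le> 1/2" "0 < h"
    and pq: "q - p \<le> real n * h"
    and w: "w \<in> {p..q}" "Z w = 0"
    and u: "u \<in> {p..q}"
  shows "Z u = 0"
  using der M(1) pq w u
proof (induction n arbitrary: p w u)
  case 0
  then have "u = w" by auto
  then show ?case using 0 by simp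
next
  case (Suc n)
  show ?case
  proof (cases "q - p \<le> h")
    case True
    have "M * (q - p) \<le> 1/2"
      using mult_left_mono[OF True M(2)] M(3) by linarith
    then show ?thesis
      using linear_ode_zero_short[OF Suc.prems(1) C Suc.prems(2) M(2) _ Suc.prems(4-6)] by blast
  next
    case False
    define r where "r = p + h"
    have r: "r \<in> {p..q}" "M * (r - p) \<le> 1/2" "q - r \<le> real n * h"
      using False M(2,3,4) Suc.prems(3) by (auto simp: r_def algebra_simps)
    have der1: "(Z has_vector_derivative (B u ** Z u)) (at u within {p..r})" if "u \<in> {p..r}" for u
      using Suc.prems(1)[of u] that r(1) by (auto intro: has_vector_derivative_within_subset)
    have der2: "(Z has_vector_derivative (B u ** Z u)) (at u within {r..q})" if "u \<in> {r..q}" for u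
      using Suc.prems(1)[of u] that r(1) by (auto intro: has_vector_derivative_within_subset)
    have left: "Z u = 0" if "u \<in> {p..r}" "v \<in> {p..r}" "Z v = 0" for u v
      by (rule linear_ode_zero_short[OF der1 C _ M(2) r(2) that(2,3,1)]) (use Suc.prems(2) r(1) in auto)
    have right: "Z u = 0" if "u \<in> {r..q}" "v \<in> {r..q}" "Z v = 0" for u v
      by (rule Suc.IH[OF der2 _ r(3) that(2,3,1)]) (use Suc.prems(2) r(1) in auto)
    have "Z r = 0"
      using left[of r w] right[of r w] Suc.prems(4,5) r(1) by force
    then show ?thesis
      using left[of u r] right[of u r] Suc.prems(6) r(1) by force
  qed
qed

lemma linear_ode_zero:
  fixes Z B :: "real \<Rightarrow> real^'n^'n"
  assumes contB: "continuous_on {1..} B"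
    and der: "\<And>u. u \<ge> 1 \<Longrightarrow> (Z has_vector_derivative (B u ** Z u)) (at u within {1..})"
    and s: "s \<ge> 1" "Z s = 0" and t: "t \<ge> 1"
  shows "Z t = 0"
proof -
  define L where "L = max s t"
  obtain C where "0 < C" and C: "\<And>(X::real^'n^'n) (Y::real^'n^'n). norm (X ** Y) \<le> norm X * norm Y * C"
    using bounded_bilinear.pos_bounded[OF bounded_bilinear_matrix_mult] by blast
  have "bounded (B ` {1..L})"
    by (intro compact_imp_bounded compact_continuous_image continuous_on_subset[OF contB]) auto
  then obtain b where b: "\<And>u. u \<in> {1..L} \<Longrightarrow> norm (B u) \<le> b"
    unfolding bounded_iff by (meson imageI)
  define M where "M = C * max b 0 + 1"
  have "0 < M"
    unfolding M_def using \<open>0 < C\<close> by (simp add: add_nonneg_pos)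
  have M: "C * norm (B u) \<le> M" if "u \<in> {1..L}" for u
  proof -
    have "C * norm (B u) \<le> C * max b 0"
      using b[OF that] \<open>0 < C\<close> by (intro mult_left_mono) auto
    then show ?thesis
      unfolding M_def by simp
  qed
  define h where "h = 1 / (2 * M)"
  obtain n :: nat where n: "(L - 1) / h \<le> real n"
    using real_arch_simple by blast
  show ?thesis
  proof (rule linear_ode_zero_interval[where p = 1 and q = L and w = s])
    show "(Z has_vector_derivative B u ** Z u) (at u within {1..L})" if "u \<in> {1..L}" for u
      using der[of u] that by (auto intro: has_vector_derivative_within_subset)
    show "M * h \<le> 1/2" "0 < h"
      using \<open>0 < M\<close> by (simp_all add: h_def)
    then show "L - 1 \<le> real n * h"
      using n by (simp add: pos_divide_le_eq)
  qed (use C M \<open>0 < M\<close> s t in \<open>simp_all add: L_def\<close>)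
qed

section \<open>Evolution families and rescaling\<close>

lemma evol_family_unique:
  assumes contB: "continuous_on {1..} B" and T1: "evol_family B T1" and T2: "evol_family B T2"
    and "t \<ge> 1" "s \<ge> 1"
  shows "T1 t s = T2 t s"
proof -
  have "T1 t s - T2 t s = 0"
  proof (rule linear_ode_zero[OF contB _ \<open>s \<ge> 1\<close> _ \<open>t \<ge> 1\<close>])
    fix u :: real assume "u \<ge> 1"
    then show "((\<lambda>u. T1 u s - T2 u s) has_vector_derivative B u ** (T1 u s - T2 u s)) (at u within {1..})"
      using T1 T2 \<open>s \<ge> 1\<close> unfolding evol_family_def matrix_diff_ldistrib
      by (intro has_vector_derivative_diff) auto
  qed (use T1 T2 \<open>s \<ge> 1\<close> in \<open>simp add: evol_family_def\<close>)
  then show ?thesis by simp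
qed

lemma evol_family_mult:
  assumes contB: "continuous_on {1..} B" and T: "evol_family B T"
    and "t \<ge> 1" "s \<ge> 1" "r \<ge> 1"
  shows "T t s ** T s r = T t r"
proof -
  have "T t s ** T s r - T t r = 0"
  proof (rule linear_ode_zero[OF contB _ \<open>s \<ge> 1\<close> _ \<open>t \<ge> 1\<close>])
    fix u :: real assume "u \<ge> 1"
    then have "((\<lambda>u. T u s) has_vector_derivative B u ** T u s) (at u within {1..})"
      using T \<open>s \<ge> 1\<close> unfolding evol_family_def by blast
    then have "((\<lambda>u. T u s ** T s r) has_vector_derivative (B u ** T u s) ** T s r) (at u within {1..})"
      by (rule bounded_linear.has_vector_derivative[OF
          bounded_bilinear.bounded_linear_left[OF bounded_bilinear_matrix_mult]])
    then show "((\<lambda>u. T u s ** T s r - T u r) has_vector_derivative B u ** (T u s ** T s r - T u r))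
        (at u within {1..})"
      using T \<open>u \<ge> 1\<close> \<open>r \<ge> 1\<close> unfolding evol_family_def matrix_diff_ldistrib matrix_mul_assoc
      by (intro has_vector_derivative_diff) auto
  qed (use T \<open>s \<ge> 1\<close> in \<open>simp add: evol_family_def\<close>)
  then show ?thesis by simp
qed

definition weighted :: "real \<Rightarrow> (real \<Rightarrow> real \<Rightarrow> real^'n^'n) \<Rightarrow> real \<Rightarrow> real \<Rightarrow> real^'n^'n" where
  "weighted \<tau> T t s = (t / s) powr (- \<tau>) *\<^sub>R T t s"

lemma weighted_apply: "weighted \<tau> T t s *v x = (t / s) powr (- \<tau>) *\<^sub>R (T t s *v x)"
  by (simp add: weighted_def scaleR_matrix_vector_assoc)

lemma weighted_commute_iff:
  assumes "0 < t" "0 < s"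
  shows "P t ** weighted \<tau> T t s = weighted \<tau> T t s ** P s \<longleftrightarrow> P t ** T t s = T t s ** P s"
  using assms by (simp add: weighted_def matrix_scalar_ac scalar_matrix_assoc[symmetric])

lemma evol_family_weighted:
  assumes T: "evol_family A T"
  shows "evol_family (\<lambda>t. A t - (\<tau> / t) *\<^sub>R mat 1) (weighted \<tau> T)"
  unfolding evol_family_def
proof (intro allI impI conjI)
  fix s :: real assume s: "s \<ge> 1"
  then show "weighted \<tau> T s s = mat 1"
    using T unfolding evol_family_def weighted_def by simp
  fix t :: real assume t: "t \<ge> 1"
  have "((\<lambda>u. (u / s) powr (- \<tau>)) has_real_derivative (- \<tau>) * (t / s) powr (- \<tau> - 1) * (1 / s))
      (at t within {1..})"
    using s t by (auto intro!: derivative_eq_intros)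
  moreover have "(- \<tau>) * (t / s) powr (- \<tau> - 1) * (1 / s) = - (\<tau> / t) * (t / s) powr (- \<tau>)"
    using s t by (simp add: powr_diff field_simps)
  ultimately have "((\<lambda>u. (u / s) powr (- \<tau>)) has_real_derivative - (\<tau> / t) * (t / s) powr (- \<tau>))
      (at t within {1..})"
    by (rule DERIV_cong)
  moreover have "((\<lambda>u. T u s) has_vector_derivative A t ** T t s) (at t within {1..})"
    using T s t unfolding evol_family_def by blast
  ultimately have deriv: "((\<lambda>u. (u / s) powr (- \<tau>) *\<^sub>R T u s) has_vector_derivative
      (t / s) powr (- \<tau>) *\<^sub>R (A t ** T t s) + (- (\<tau> / t) * (t / s) powr (- \<tau>)) *\<^sub>R T t s) (at t within {1..})"
    by (rule has_vector_derivative_scaleR)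
  have shift: "(A t - (\<tau> / t) *\<^sub>R mat 1) ** T t s = A t ** T t s - (\<tau> / t) *\<^sub>R T t s"
    by (simp add: matrix_diff_rdistrib flip: scalar_matrix_assoc)
  have deriv_eq: "(t / s) powr (- \<tau>) *\<^sub>R (A t ** T t s) + (- (\<tau> / t) * (t / s) powr (- \<tau>)) *\<^sub>R T t s
      = (A t - (\<tau> / t) *\<^sub>R mat 1) ** weighted \<tau> T t s"
    unfolding weighted_def matrix_scalar_ac scalar_matrix_assoc[symmetric] shift
    by (simp add: algebra_simps)
  show "((\<lambda>u. weighted \<tau> T u s) has_vector_derivative
      (A t - (\<tau> / t) *\<^sub>R mat 1) ** weighted \<tau> T t s) (at t within {1..})"
    unfolding deriv_eq[symmetric] unfolding weighted_def by (rule deriv)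
qed

lemma spd_family_cong:
  assumes "\<And>t s. t \<ge> 1 \<Longrightarrow> s \<ge> 1 \<Longrightarrow> T1 t s = T2 t s"
  shows "spd_family T1 N \<longleftrightarrow> spd_family T2 N"
  unfolding spd_family_def using assms by simp

lemma ode_spd_iff_weighted:
  assumes "continuous_on {1..} A" and "evol_family A T"
  shows "ode_spd (\<lambda>t. A t - (\<tau> / t) *\<^sub>R mat 1) N \<longleftrightarrow> spd_family (weighted \<tau> T) N"
proof -
  have "continuous_on {1..} (\<lambda>t. A t - (\<tau> / t) *\<^sub>R mat 1)"
    by (intro continuous_intros assms(1)) auto
  then have "spd_family T' N \<longleftrightarrow> spd_family (weighted \<tau> T) N"
    if "evol_family (\<lambda>t. A t - (\<tau> / t) *\<^sub>R mat 1) T'" for T'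
    using evol_family_unique[OF _ that evol_family_weighted[OF assms(2)]]
    by (intro spd_family_cong) blast
  then show ?thesis
    unfolding ode_spd_def using evol_family_weighted[OF assms(2)] by blast
qed

section \<open>Cocycles and their samples at integer times\<close>

definition nfloor :: "real \<Rightarrow> nat" where
  "nfloor t = nat \<lfloor>t\<rfloor>"

lemma nfloor_ge_1: "1 \<le> t \<Longrightarrow> 1 \<le> nfloor t"
  unfolding nfloor_def by linarith

lemma nfloor_le: "0 \<le> t \<Longrightarrow> real (nfloor t) \<le> t"
  unfolding nfloor_def by linarith

lemma le_2_nfloor:
  assumes "1 \<le> t"
  shows "t \<le> 2 * real (nfloor t)"
proof -
  have "1 \<le> \<lfloor>t\<rfloor>"
    using assms by (simp add: le_floor_iff)
  then have "real (nfloor t) = \<lfloor>t\<rfloor>" "1 \<le> real_of_int \<lfloor>t\<rfloor>"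
    unfolding nfloor_def by simp_all
  then show ?thesis
    using real_of_int_floor_add_one_gt[of t] by linarith
qed

lemma nfloor_mono: "s \<le> t \<Longrightarrow> nfloor s \<le> nfloor t"
  unfolding nfloor_def by linarith

locale cocycle_family =
  fixes W :: "real \<Rightarrow> real \<Rightarrow> real^'n^'n"
  assumes cocycle_mult: "1 \<le> t \<Longrightarrow> 1 \<le> s \<Longrightarrow> 1 \<le> r \<Longrightarrow> W t s ** W s r = W t r"
    and cocycle_id: "1 \<le> s \<Longrightarrow> W s s = mat 1"
begin

lemma cocycle_mult_vec: "1 \<le> t \<Longrightarrow> 1 \<le> s \<Longrightarrow> 1 \<le> r \<Longrightarrow> W t s *v (W s r *v x) = W t r *v x"
  by (simp add: matrix_vector_mul_assoc cocycle_mult)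

lemma cocycle_inverse: "1 \<le> t \<Longrightarrow> 1 \<le> s \<Longrightarrow> W t s ** W s t = mat 1"
  by (simp add: cocycle_mult cocycle_id)

lemma commuting_conj:
  assumes "\<And>t s. 1 \<le> t \<Longrightarrow> 1 \<le> s \<Longrightarrow> P t ** W t s = W t s ** P s" and "1 \<le> s"
  shows "P s = W s 1 ** P 1 ** W 1 s"
proof -
  have "P s = P s ** W s 1 ** W 1 s"
    using cocycle_inverse[of s 1] assms(2) by (simp add: matrix_mul_assoc[symmetric])
  then show ?thesis
    using assms by simp
qed

lemma commuting_absorb:
  assumes P: "\<And>t s. 1 \<le> t \<Longrightarrow> 1 \<le> s \<Longrightarrow> P t ** W t s = W t s ** P s"
    and Q: "\<And>t s. 1 \<le> t \<Longrightarrow> 1 \<le> s \<Longrightarrow> Q t ** W t s = W t s ** Q s"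
    and "P 1 ** P 1 = P 1" "range (\<lambda>y. Q 1 *v y) \<subseteq> range (\<lambda>y. P 1 *v y)" "1 \<le> s"
  shows "P s ** Q s = Q s"
proof -
  have "P 1 ** Q 1 = Q 1"
  proof (rule matrix_eq[THEN iffD2], rule allI)
    fix x
    obtain z where z: "Q 1 *v x = P 1 *v z"
      using assms(4) by blast
    then have "(P 1 ** Q 1) *v x = (P 1 ** P 1) *v z"
      by (simp flip: matrix_vector_mul_assoc)
    then show "(P 1 ** Q 1) *v x = Q 1 *v x"
      using assms(3) z by simp
  qed
  then show ?thesis
    using commuting_conj[OF P assms(5)] commuting_conj[OF Q assms(5)] cocycle_inverse[of 1 s] assms(5)
    by (simp add: matrix_mul_assoc) (simp flip: matrix_mul_assoc)
qed

definition sample :: "nat \<Rightarrow> real^'n^'n" where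
  "sample n = W (real n + 1) (real n)"

lemma fwd_sample: "1 \<le> n \<Longrightarrow> fwd sample n k = W (real (n + k)) (real n)"
proof (induction k)
  case 0
  then show ?case by (simp add: cocycle_id)
next
  case (Suc k)
  then show ?case
    using cocycle_mult[of "real (n + k) + 1" "real (n + k)" "real n"] by (simp add: sample_def add_ac)
qed

lemma bwd_sample: "1 \<le> m \<Longrightarrow> bwd sample m k = W (real m) (real (m + k))"
proof (induction k)
  case 0
  then show ?case by (simp add: cocycle_id)
next
  case (Suc k)
  have "matrix_inv (sample (m + k)) = W (real (m + k)) (real (m + k) + 1)"
    unfolding sample_def using Suc.prems by (intro matrix_inv_eq cocycle_inverse) auto
  then show ?case
    using Suc cocycle_mult[of "real m" "real (m + k)" "real (m + k) + 1"] by (simp add: add_ac)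
qed

lemma cocycle_sample: "1 \<le> m \<Longrightarrow> 1 \<le> n \<Longrightarrow> cocycle sample m n = W (real m) (real n)"
  unfolding cocycle_def using fwd_sample[of n "m - n"] bwd_sample[of m "n - m"] by auto

lemma seq_spd_sample:
  assumes "spd_family W N"
  shows "seq_spd sample (\<lambda>n. N (real n))"
proof -
  obtain P C l b where dich: "0 < C" "0 < l" "l \<le> b"
    "\<forall>t\<ge>1. P t ** P t = P t" "\<forall>t\<ge>1. \<forall>s\<ge>1. P t ** W t s = W t s ** P s"
    "\<forall>t s x. 1 \<le> s \<and> s \<le> t \<longrightarrow>
        N t (W t s *v (P s *v x)) \<le> C * (t / s) powr (- l) * N s x \<and>
        N s (W s t *v ((mat 1 - P t) *v x)) \<le> C * (t / s) powr (- l) * N t x \<and>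
        N t (W t s *v x) \<le> C * (t / s) powr b * N s x \<and>
        N s (W s t *v x) \<le> C * (t / s) powr b * N t x"
    using assms unfolding spd_family_def by blast
  show ?thesis
    unfolding seq_spd_def
    by (rule exI[of _ "\<lambda>n. P (real n)"], rule exI[of _ C], rule exI[of _ l], rule exI[of _ b])
       (use dich in \<open>auto simp: cocycle_sample sample_def add.commute\<close>)
qed

lemma sample_commute:
  assumes step: "\<And>n. 1 \<le> n \<Longrightarrow> sample n ** Pd n = Pd (Suc n) ** sample n"
    and "1 \<le> i" "1 \<le> j"
  shows "W (real i) (real j) ** Pd j = Pd i ** W (real i) (real j)"
proof -
  have fwd: "W (real (j + k)) (real j) ** Pd j = Pd (j + k) ** W (real (j + k)) (real j)"
    if "1 \<le> j" for j k
  proof (induction k)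
    case 0
    then show ?case using that by (simp add: cocycle_id)
  next
    case (Suc k)
    have split: "W (real (j + Suc k)) (real j) = sample (j + k) ** W (real (j + k)) (real j)"
      using cocycle_mult[of "real (j + k) + 1" "real (j + k)" "real j"] that
      by (simp add: sample_def add_ac)
    have "W (real (j + Suc k)) (real j) ** Pd j = sample (j + k) ** (W (real (j + k)) (real j) ** Pd j)"
      unfolding split by (simp only: matrix_mul_assoc)
    also have "\<dots> = (sample (j + k) ** Pd (j + k)) ** W (real (j + k)) (real j)"
      unfolding Suc.IH by (simp only: matrix_mul_assoc)
    also have "\<dots> = Pd (j + Suc k) ** (sample (j + k) ** W (real (j + k)) (real j))"
      using step[of "j + k"] that by (simp add: matrix_mul_assoc)
    finally show ?case
      unfolding split .
  qed
  show ?thesis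
  proof (cases "j \<le> i")
    case True
    then show ?thesis using fwd[OF \<open>1 \<le> j\<close>, of "i - j"] by simp
  next
    case False
    then have comm: "W (real j) (real i) ** Pd i = Pd j ** W (real j) (real i)"
      using fwd[OF \<open>1 \<le> i\<close>, of "j - i"] by simp
    show ?thesis
      by (rule matrix_commute_inverse[OF cocycle_inverse cocycle_inverse comm]) (use assms(2,3) in simp_all)
  qed
qed

definition interpolate :: "(nat \<Rightarrow> real^'n^'n) \<Rightarrow> real \<Rightarrow> real^'n^'n" where
  "interpolate Pd t = W t (real (nfloor t)) ** Pd (nfloor t) ** W (real (nfloor t)) t"

lemma interpolate_apply:
  "interpolate Pd t *v x = W t (real (nfloor t)) *v (Pd (nfloor t) *v (W (real (nfloor t)) t *v x))"
  by (simp add: interpolate_def matrix_vector_mul_assoc matrix_mul_assoc)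

lemma interpolate_idem:
  assumes "\<And>n. 1 \<le> n \<Longrightarrow> Pd n ** Pd n = Pd n" and "1 \<le> t"
  shows "interpolate Pd t ** interpolate Pd t = interpolate Pd t"
proof -
  have n: "1 \<le> real (nfloor t)"
    using nfloor_ge_1[OF \<open>1 \<le> t\<close>] by simp
  have "Pd (nfloor t) *v (Pd (nfloor t) *v y) = Pd (nfloor t) *v y" for y
    using assms(1)[of "nfloor t"] n by (simp add: matrix_vector_mul_assoc)
  then show ?thesis
    using n \<open>1 \<le> t\<close> unfolding matrix_eq
    by (simp add: interpolate_apply cocycle_mult_vec cocycle_id flip: matrix_vector_mul_assoc)
qed

lemma interpolate_commute:
  assumes step: "\<And>n. 1 \<le> n \<Longrightarrow> sample n ** Pd n = Pd (Suc n) ** sample n"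
    and "1 \<le> t" "1 \<le> s"
  shows "interpolate Pd t ** W t s = W t s ** interpolate Pd s"
proof (rule matrix_eq[THEN iffD2], intro allI)
  fix y
  define n m where "n = nfloor t" and "m = nfloor s"
  have nm: "1 \<le> real n" "1 \<le> real m"
    using nfloor_ge_1 assms(2,3) unfolding n_def m_def by auto
  have commute: "Pd n *v (W n m *v z) = W n m *v (Pd m *v z)" for z
    using sample_commute[OF step, of n m] nm by (simp add: matrix_vector_mul_assoc)
  have "(interpolate Pd t ** W t s) *v y = W t n *v (Pd n *v (W n t *v (W t s *v y)))"
    by (simp add: interpolate_apply n_def flip: matrix_vector_mul_assoc)
  also have "\<dots> = W t n *v (Pd n *v (W n m *v (W m s *v y)))"
    using nm assms(2,3) by (simp add: cocycle_mult_vec)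
  also have "\<dots> = W t n *v (W n m *v (Pd m *v (W m s *v y)))"
    by (simp only: commute)
  also have "\<dots> = W t s *v (W s m *v (Pd m *v (W m s *v y)))"
    using nm assms(2,3) by (simp add: cocycle_mult_vec)
  also have "\<dots> = (W t s ** interpolate Pd s) *v y"
    by (simp add: interpolate_apply m_def flip: matrix_vector_mul_assoc)
  finally show "(interpolate Pd t ** W t s) *v y = (W t s ** interpolate Pd s) *v y" .
qed

end

lemma cocycle_family_weighted:
  assumes "cocycle_family T"
  shows "cocycle_family (weighted \<tau> T)"
proof
  fix t s r :: real
  assume "1 \<le> t" "1 \<le> s" "1 \<le> r"
  then have "(s / r) powr (- \<tau>) * (t / s) powr (- \<tau>) = (t / r) powr (- \<tau>)"
    by (simp add: powr_mult[symmetric])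
  then show "weighted \<tau> T t s ** weighted \<tau> T s r = weighted \<tau> T t r"
    using cocycle_family.cocycle_mult[OF assms] \<open>1 \<le> t\<close> \<open>1 \<le> s\<close> \<open>1 \<le> r\<close>
    by (simp add: weighted_def matrix_scalar_ac flip: scalar_matrix_assoc)
qed (use cocycle_family.cocycle_id[OF assms] in \<open>simp add: weighted_def\<close>)

section \<open>Polynomial dichotomies under bounded growth\<close>

lemma powr_bound_rescale:
  fixes q :: real
  assumes "X \<le> C * q powr e * Y" "0 \<le> C" "C \<le> C'" "c + e \<le> e'" "1 \<le> q" "0 \<le> Y"
  shows "q powr c * X \<le> C' * q powr e' * Y"
proof -
  have "q powr c * X \<le> q powr c * (C * q powr e * Y)"
    using assms(1) by (rule mult_left_mono) simp
  also have "\<dots> = C * q powr (c + e) * Y"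
    by (simp add: powr_add)
  also have "\<dots> \<le> C' * q powr e' * Y"
    using assms(2-6) by (intro mult_right_mono mult_mono powr_mono) auto
  finally show ?thesis .
qed

lemma powr_bound_mono:
  fixes q :: real
  assumes "X \<le> C * q powr e * Y" "0 \<le> C" "C \<le> C'" "e \<le> e'" "1 \<le> q" "0 \<le> Y"
  shows "X \<le> C' * q powr e' * Y"
  using powr_bound_rescale[OF assms(1-3) _ assms(5,6), of 0 e'] assms(4,5) by simp

lemma powr_divide_swap: "0 < t \<Longrightarrow> 0 < s \<Longrightarrow> (s / t) powr e = (t / s) powr (- e)"
  for s t e :: real
  by (simp add: powr_divide powr_minus_divide)

lemma nfloor_ratio_powr:
  assumes "1 \<le> s" "s \<le> t" "0 \<le> l"
  shows "(real (nfloor t) / real (nfloor s)) powr (- l) \<le> 2 powr l * (t / s) powr (- l)"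
proof -
  have "(t / 2) / s \<le> real (nfloor t) / real (nfloor s)"
    using le_2_nfloor[of t] nfloor_le[of s] nfloor_ge_1[of s] assms by (intro frac_le) auto
  then have "(t / s) / 2 \<le> real (nfloor t) / real (nfloor s)"
    by simp
  then have "(real (nfloor t) / real (nfloor s)) powr (- l) \<le> ((t / s) / 2) powr (- l)"
    using assms by (intro powr_mono2') auto
  also have "\<dots> = 2 powr l * (t / s) powr (- l)"
    using assms by (simp add: powr_divide powr_minus powr_mult divide_simps)
  finally show ?thesis .
qed

lemma nfloor_quotient_powr:
  assumes "1 \<le> t" "0 \<le> b"
  shows "(t / real (nfloor t)) powr b \<le> 2 powr b"
  using assms le_2_nfloor[of t] nfloor_ge_1[of t] by (intro powr_mono2) (auto simp: divide_simps)

definition poly_dichotomy ::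
  "(real \<Rightarrow> real \<Rightarrow> real^'n^'n) \<Rightarrow> (real \<Rightarrow> real^'n \<Rightarrow> real) \<Rightarrow> (real \<Rightarrow> real^'n^'n) \<Rightarrow> real \<Rightarrow> real \<Rightarrow> bool"
  where "poly_dichotomy W N P C l \<longleftrightarrow> 0 < C \<and> 0 < l \<and>
    (\<forall>t\<ge>1. P t ** P t = P t) \<and> (\<forall>t\<ge>1. \<forall>s\<ge>1. P t ** W t s = W t s ** P s) \<and>
    (\<forall>t s x. 1 \<le> s \<and> s \<le> t \<longrightarrow>
       N t (W t s *v (P s *v x)) \<le> C * (t / s) powr (- l) * N s x \<and>
       N s (W s t *v ((mat 1 - P t) *v x)) \<le> C * (t / s) powr (- l) * N t x)"

lemma poly_dichotomyI:
  assumes "0 < C" "0 < l" "\<And>t. 1 \<le> t \<Longrightarrow> P t ** P t = P t"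
    "\<And>t s. 1 \<le> t \<Longrightarrow> 1 \<le> s \<Longrightarrow> P t ** W t s = W t s ** P s"
    "\<And>t s x. 1 \<le> s \<Longrightarrow> s \<le> t \<Longrightarrow> N t (W t s *v (P s *v x)) \<le> C * (t / s) powr (- l) * N s x"
    "\<And>t s x. 1 \<le> s \<Longrightarrow> s \<le> t \<Longrightarrow> N s (W s t *v ((mat 1 - P t) *v x)) \<le> C * (t / s) powr (- l) * N t x"
  shows "poly_dichotomy W N P C l"
  using assms unfolding poly_dichotomy_def by blast

lemma poly_dichotomyD:
  assumes "poly_dichotomy W N P C l"
  shows "0 < C" "0 < l" "\<And>t. 1 \<le> t \<Longrightarrow> P t ** P t = P t"
    "\<And>t s. 1 \<le> t \<Longrightarrow> 1 \<le> s \<Longrightarrow> P t ** W t s = W t s ** P s"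
    "\<And>t s x. 1 \<le> s \<Longrightarrow> s \<le> t \<Longrightarrow> N t (W t s *v (P s *v x)) \<le> C * (t / s) powr (- l) * N s x"
    "\<And>t s x. 1 \<le> s \<Longrightarrow> s \<le> t \<Longrightarrow> N s (W s t *v ((mat 1 - P t) *v x)) \<le> C * (t / s) powr (- l) * N t x"
  using assms unfolding poly_dichotomy_def by blast+

locale poly_growth = cocycle_family W for W :: "real \<Rightarrow> real \<Rightarrow> real^'n^'n" +
  fixes N :: "real \<Rightarrow> real^'n \<Rightarrow> real" and K b :: real
  assumes is_norm_N: "1 \<le> t \<Longrightarrow> is_norm (N t)"
    and K_pos: "0 < K" and b_nonneg: "0 \<le> b"
    and growth_fwd: "1 \<le> s \<Longrightarrow> s \<le> t \<Longrightarrow> N t (W t s *v x) \<le> K * (t / s) powr b * N s x"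
    and growth_bwd: "1 \<le> s \<Longrightarrow> s \<le> t \<Longrightarrow> N s (W s t *v x) \<le> K * (t / s) powr b * N t x"
begin

lemma N_nonneg: "1 \<le> t \<Longrightarrow> 0 \<le> N t x"
  by (rule is_norm_nonneg[OF is_norm_N])

lemma spd_family_iff_poly_dichotomy: "spd_family W N \<longleftrightarrow> (\<exists>P C l. poly_dichotomy W N P C l)"
proof
  assume "spd_family W N"
  then show "\<exists>P C l. poly_dichotomy W N P C l"
    unfolding spd_family_def poly_dichotomy_def by blast
next
  assume "\<exists>P C l. poly_dichotomy W N P C l"
  then obtain P C l where dich: "poly_dichotomy W N P C l"
    by blast
  note d = poly_dichotomyD[OF dich]
  show "spd_family W N"
    unfolding spd_family_def
  proof (rule exI[of _ P], rule exI[of _ "max C K"], rule exI[of _ l], rule exI[of _ "max l b"],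
      intro conjI allI impI)
    fix t s :: real and x :: "real^'n"
    assume ts: "1 \<le> s \<and> s \<le> t"
    show "N t (W t s *v (P s *v x)) \<le> max C K * (t / s) powr (- l) * N s x"
      by (rule powr_bound_mono[OF d(5)]) (use ts d(1) N_nonneg in auto)
    show "N s (W s t *v ((mat 1 - P t) *v x)) \<le> max C K * (t / s) powr (- l) * N t x"
      by (rule powr_bound_mono[OF d(6)]) (use ts d(1) N_nonneg in auto)
    show "N t (W t s *v x) \<le> max C K * (t / s) powr (max l b) * N s x"
      by (rule powr_bound_mono[OF growth_fwd]) (use ts K_pos N_nonneg in auto)
    show "N s (W s t *v x) \<le> max C K * (t / s) powr (max l b) * N t x"
      by (rule powr_bound_mono[OF growth_bwd]) (use ts K_pos N_nonneg in auto)
  qed (use d K_pos in auto)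
qed

text \<open>By \<open>bounded_orbits_eq_range\<close> this is the range of \<open>P 1\<close> for every dichotomy; unlike the
  projections, it is canonical.\<close>

definition bounded_orbits :: "(real^'n) set" where
  "bounded_orbits = {x. \<exists>B. \<forall>t\<ge>1. N t (W t 1 *v x) \<le> B}"

lemma bounded_orbits_eq_range:
  assumes dich: "poly_dichotomy W N P C l"
  shows "bounded_orbits = range (\<lambda>y. P 1 *v y)"
proof
  note d = poly_dichotomyD[OF dich]
  show "range (\<lambda>y. P 1 *v y) \<subseteq> bounded_orbits"
  proof clarify
    fix y
    have "N t (W t 1 *v (P 1 *v y)) \<le> C * N 1 y" if "1 \<le> t" for t
      using powr_bound_mono[OF d(5)[of 1 t y] _ order_refl, of 0] d(1,2) N_nonneg that by simp
    then show "P 1 *v y \<in> bounded_orbits"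
      unfolding bounded_orbits_def by blast
  qed
  show "bounded_orbits \<subseteq> range (\<lambda>y. P 1 *v y)"
  proof
    fix x assume "x \<in> bounded_orbits"
    then obtain B where B: "\<And>t. 1 \<le> t \<Longrightarrow> N t (W t 1 *v x) \<le> B"
      unfolding bounded_orbits_def by blast
    define y where "y = (mat 1 - P 1) *v x"
    have bound: "N 1 y \<le> C * t powr (- l) * B" if t: "1 \<le> t" for t
    proof -
      have "(mat 1 - P t) ** W t 1 = W t 1 ** (mat 1 - P 1)"
        using d(4)[of t 1] t by (simp add: matrix_diff_ldistrib matrix_diff_rdistrib)
      then have "y = W 1 t *v ((mat 1 - P t) *v (W t 1 *v x))"
        using cocycle_inverse[of 1 t] t by (simp add: y_def matrix_vector_mul_assoc matrix_mul_assoc)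
      then have "N 1 y \<le> C * t powr (- l) * N t (W t 1 *v x)"
        using d(6)[of 1 t] t by simp
      also have "\<dots> \<le> C * t powr (- l) * B"
        using B[OF t] d(1) by (simp add: mult_left_mono)
      finally show ?thesis .
    qed
    have "((\<lambda>t. C * t powr (- l) * B) \<longlongrightarrow> C * 0 * B) at_top"
      using d(2) by (intro tendsto_intros tendsto_neg_powr filterlim_ident) auto
    moreover have "\<forall>\<^sub>F t in at_top. N 1 y \<le> C * t powr (- l) * B"
      unfolding eventually_at_top_linorder using bound by blast
    ultimately have "N 1 y \<le> 0"
      using tendsto_lowerbound by fastforce
    then have "y = 0"
      using N_nonneg[of 1 y] is_norm_eq_0[OF is_norm_N[of 1]] by simp
    then show "x \<in> range (\<lambda>y. P 1 *v y)"
      unfolding y_def by (metis matrix_vector_mul_lid matrix_vector_mult_diff_rdistrib right_minus_eq rangeI)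
  qed
qed

lemma growth_from_nfloor:
  assumes "1 \<le> t"
  shows "N t (W t (real (nfloor t)) *v x) \<le> K * 2 powr b * N (real (nfloor t)) x"
proof -
  have "N t (W t (real (nfloor t)) *v x) \<le> K * (t / real (nfloor t)) powr b * N (real (nfloor t)) x"
    using assms nfloor_ge_1 nfloor_le by (intro growth_fwd) auto
  also have "\<dots> \<le> K * 2 powr b * N (real (nfloor t)) x"
    using assms nfloor_quotient_powr[OF assms b_nonneg] K_pos N_nonneg nfloor_ge_1
    by (intro mult_right_mono mult_left_mono) auto
  finally show ?thesis .
qed

lemma growth_to_nfloor:
  assumes "1 \<le> t"
  shows "N (real (nfloor t)) (W (real (nfloor t)) t *v x) \<le> K * 2 powr b * N t x"
proof -
  have "N (real (nfloor t)) (W (real (nfloor t)) t *v x) \<le> K * (t / real (nfloor t)) powr b * N t x"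
    using assms nfloor_ge_1 nfloor_le by (intro growth_bwd) auto
  also have "\<dots> \<le> K * 2 powr b * N t x"
    using assms nfloor_quotient_powr[OF assms b_nonneg] K_pos N_nonneg
    by (intro mult_right_mono mult_left_mono) auto
  finally show ?thesis .
qed

text \<open>Moving between \<open>t\<close> and \<open>\<lfloor>t\<rfloor>\<close> costs the factor \<open>K * 2 powr b\<close> twice, and comparing
  \<open>\<lfloor>t\<rfloor> / \<lfloor>s\<rfloor>\<close> with \<open>t / s\<close> costs \<open>2 powr l\<close>.\<close>

lemma interpolate_decay:
  assumes decay: "\<And>m n x. 1 \<le> n \<Longrightarrow> n \<le> m \<Longrightarrow>
      N (real m) (W (real m) (real n) *v (Pd n *v x)) \<le> Kd * (real m / real n) powr (- l) * N (real n) x"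
    and "0 \<le> Kd" "0 \<le> l" and ts: "1 \<le> s" "s \<le> t"
  shows "N t (W t s *v (interpolate Pd s *v x))
    \<le> (K * 2 powr b)\<^sup>2 * Kd * 2 powr l * (t / s) powr (- l) * N s x"
proof -
  define n m where "n = nfloor t" and "m = nfloor s"
  have nm: "1 \<le> m" "m \<le> n" "1 \<le> real n" "1 \<le> real m"
    using ts nfloor_ge_1 nfloor_mono unfolding n_def m_def by force+
  have ratio: "(real n / real m) powr (- l) \<le> 2 powr l * (t / s) powr (- l)"
    using nfloor_ratio_powr[OF ts assms(3)] by (simp add: n_def m_def)
  let ?y = "W (real m) s *v x"
  have "W t s *v (interpolate Pd s *v x) = W t (real n) *v (W (real n) (real m) *v (Pd m *v ?y))"
    using ts nm by (simp add: interpolate_apply cocycle_mult_vec flip: m_def)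
  then have "N t (W t s *v (interpolate Pd s *v x))
      = N t (W t (real n) *v (W (real n) (real m) *v (Pd m *v ?y)))"
    by simp
  also have "\<dots> \<le> K * 2 powr b * N (real n) (W (real n) (real m) *v (Pd m *v ?y))"
    using growth_from_nfloor ts unfolding n_def by simp
  also have "\<dots> \<le> K * 2 powr b * (Kd * (real n / real m) powr (- l) * N (real m) ?y)"
    using decay[OF nm(1,2)] K_pos by (intro mult_left_mono) auto
  also have "\<dots> \<le> K * 2 powr b * (Kd * (2 powr l * (t / s) powr (- l)) * (K * 2 powr b * N s x))"
    using ratio growth_to_nfloor[OF ts(1), of x] K_pos \<open>0 \<le> Kd\<close> N_nonneg nm
    unfolding m_def by (intro mult_left_mono mult_mono) auto
  also have "\<dots> = (K * 2 powr b)\<^sup>2 * Kd * 2 powr l * (t / s) powr (- l) * N s x"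
    by (simp add: power2_eq_square ac_simps)
  finally show ?thesis .
qed

lemma interpolate_expand:
  assumes expand: "\<And>m n x. 1 \<le> n \<Longrightarrow> n \<le> m \<Longrightarrow>
      N (real n) (W (real n) (real m) *v ((mat 1 - Pd m) *v x)) \<le> Kd * (real m / real n) powr (- l) * N (real m) x"
    and "0 \<le> Kd" "0 \<le> l" and ts: "1 \<le> s" "s \<le> t"
  shows "N s (W s t *v ((mat 1 - interpolate Pd t) *v x))
    \<le> (K * 2 powr b)\<^sup>2 * Kd * 2 powr l * (t / s) powr (- l) * N t x"
proof -
  define n m where "n = nfloor t" and "m = nfloor s"
  have nm: "1 \<le> m" "m \<le> n" "1 \<le> real n" "1 \<le> real m"
    using ts nfloor_ge_1 nfloor_mono unfolding n_def m_def by force+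
  have ratio: "(real n / real m) powr (- l) \<le> 2 powr l * (t / s) powr (- l)"
    using nfloor_ratio_powr[OF ts assms(3)] by (simp add: n_def m_def)
  let ?z = "W (real n) t *v x"
  have "W s t *v ((mat 1 - interpolate Pd t) *v x) = W s (real n) *v ?z - W s (real n) *v (Pd n *v ?z)"
    using ts nm by (simp add: interpolate_apply cocycle_mult_vec matrix_vector_mult_diff_rdistrib
        matrix_vector_mult_diff_distrib flip: n_def)
  also have "\<dots> = W s (real m) *v (W (real m) (real n) *v ((mat 1 - Pd n) *v ?z))"
    using ts nm by (simp add: cocycle_mult_vec matrix_vector_mult_diff_rdistrib matrix_vector_mult_diff_distrib)
  finally have "N s (W s t *v ((mat 1 - interpolate Pd t) *v x))
      = N s (W s (real m) *v (W (real m) (real n) *v ((mat 1 - Pd n) *v ?z)))"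
    by simp
  also have "\<dots> \<le> K * 2 powr b * N (real m) (W (real m) (real n) *v ((mat 1 - Pd n) *v ?z))"
    using growth_from_nfloor ts unfolding m_def by simp
  also have "\<dots> \<le> K * 2 powr b * (Kd * (real n / real m) powr (- l) * N (real n) ?z)"
    using expand[OF nm(1,2)] K_pos by (intro mult_left_mono) auto
  also have "\<dots> \<le> K * 2 powr b * (Kd * (2 powr l * (t / s) powr (- l)) * (K * 2 powr b * N t x))"
    using ratio growth_to_nfloor[of t x] ts K_pos \<open>0 \<le> Kd\<close> N_nonneg nm
    unfolding n_def by (intro mult_left_mono mult_mono) auto
  also have "\<dots> = (K * 2 powr b)\<^sup>2 * Kd * 2 powr l * (t / s) powr (- l) * N t x"
    by (simp add: power2_eq_square ac_simps)
  finally show ?thesis .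
qed

lemma poly_dichotomy_interpolate:
  assumes proj: "\<And>n. 1 \<le> n \<Longrightarrow> Pd n ** Pd n = Pd n \<and> sample n ** Pd n = Pd (Suc n) ** sample n"
    and decay: "\<And>m n x. 1 \<le> n \<Longrightarrow> n \<le> m \<Longrightarrow>
      N (real m) (W (real m) (real n) *v (Pd n *v x)) \<le> Kd * (real m / real n) powr (- l) * N (real n) x"
    and expand: "\<And>m n x. 1 \<le> n \<Longrightarrow> n \<le> m \<Longrightarrow>
      N (real n) (W (real n) (real m) *v ((mat 1 - Pd m) *v x)) \<le> Kd * (real m / real n) powr (- l) * N (real m) x"
    and "0 < Kd" "0 < l"
  shows "poly_dichotomy W N (interpolate Pd) ((K * 2 powr b)\<^sup>2 * Kd * 2 powr l) l"
proof (rule poly_dichotomyI)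
  show "0 < (K * 2 powr b)\<^sup>2 * Kd * 2 powr l" "0 < l"
    using K_pos assms(4,5) by simp_all
  show "interpolate Pd t ** interpolate Pd t = interpolate Pd t" if "1 \<le> t" for t
    using proj that by (intro interpolate_idem) auto
  show "interpolate Pd t ** W t s = W t s ** interpolate Pd s" if "1 \<le> t" "1 \<le> s" for t s
    using proj that by (intro interpolate_commute) auto
  show "N t (W t s *v (interpolate Pd s *v x))
      \<le> (K * 2 powr b)\<^sup>2 * Kd * 2 powr l * (t / s) powr (- l) * N s x" if "1 \<le> s" "s \<le> t" for t s x
    using interpolate_decay[OF decay _ _ that] assms(4,5) by simp
  show "N s (W s t *v ((mat 1 - interpolate Pd t) *v x))
      \<le> (K * 2 powr b)\<^sup>2 * Kd * 2 powr l * (t / s) powr (- l) * N t x" if "1 \<le> s" "s \<le> t" for t s x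
    using interpolate_expand[OF expand _ _ that] assms(4,5) by simp
qed

lemma spd_family_if_seq_spd:
  assumes "seq_spd sample (\<lambda>n. N (real n))"
  shows "spd_family W N"
proof -
  obtain Pd Kd l bd where "0 < Kd" "0 < l"
    and proj: "\<And>n. 1 \<le> n \<Longrightarrow> Pd n ** Pd n = Pd n \<and> sample n ** Pd n = Pd (Suc n) ** sample n"
    and bounds: "\<forall>m n x. 1 \<le> n \<and> n \<le> m \<longrightarrow>
        N (real m) (cocycle sample m n *v (Pd n *v x)) \<le> Kd * (real m / real n) powr (- l) * N (real n) x \<and>
        N (real n) (cocycle sample n m *v ((mat 1 - Pd m) *v x)) \<le> Kd * (real m / real n) powr (- l) * N (real m) x \<and>
        N (real m) (cocycle sample m n *v x) \<le> Kd * (real m / real n) powr bd * N (real n) x \<and>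
        N (real n) (cocycle sample n m *v x) \<le> Kd * (real m / real n) powr bd * N (real m) x"
    using assms unfolding seq_spd_def by blast
  have "N (real m) (W (real m) (real n) *v (Pd n *v x)) \<le> Kd * (real m / real n) powr (- l) * N (real n) x"
    and "N (real n) (W (real n) (real m) *v ((mat 1 - Pd m) *v x)) \<le> Kd * (real m / real n) powr (- l) * N (real m) x"
    if "1 \<le> n" "n \<le> m" for m n x
    using bounds that by (simp_all add: cocycle_sample)
  then have "poly_dichotomy W N (interpolate Pd) ((K * 2 powr b)\<^sup>2 * Kd * 2 powr l) l"
    using proj \<open>0 < Kd\<close> \<open>0 < l\<close> by (intro poly_dichotomy_interpolate)
  then show ?thesis
    using spd_family_iff_poly_dichotomy by blast
qed

lemma spd_family_iff_seq_spd: "spd_family W N \<longleftrightarrow> seq_spd sample (\<lambda>n. N (real n))"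
  using seq_spd_sample spd_family_if_seq_spd by blast

end

section \<open>Level sets of a monotone dimension function\<close>

text \<open>Here \<open>R\<close> stands for the resolvent and \<open>D\<close> for the dimension of the space of bounded orbits;
  the gaps between consecutive level sets are the spectral intervals.\<close>

locale spectral_levels =
  fixes R :: "real set" and D :: "real \<Rightarrow> nat" and d :: nat and c :: real
  assumes locally_const: "\<tau> \<in> R \<Longrightarrow> \<exists>e>0. \<forall>\<sigma>. \<bar>\<sigma> - \<tau>\<bar> < e \<longrightarrow> \<sigma> \<in> R \<and> D \<sigma> = D \<tau>"
    and mono_D: "mono D"
    and level_convex: "\<tau>1 \<in> R \<Longrightarrow> \<tau>2 \<in> R \<Longrightarrow> \<tau>1 \<le> \<tau> \<Longrightarrow> \<tau> \<le> \<tau>2 \<Longrightarrow> D \<tau>1 = D \<tau>2 \<Longrightarrow> \<tau> \<in> R"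
    and above: "c < \<tau> \<Longrightarrow> \<tau> \<in> R \<and> D \<tau> = d"
    and below: "\<tau> < - c \<Longrightarrow> \<tau> \<in> R \<and> D \<tau> = 0"
    and d_pos: "0 < d"
begin

definition num_intervals :: nat where
  "num_intervals = card (D ` R) - 1"

definition levelset :: "nat \<Rightarrow> real set" where
  "levelset j = {\<tau> \<in> R. D \<tau> = enumerate (D ` R) j}"

lemma values_subset: "D ` R \<subseteq> {..d}"
proof -
  have "D \<tau> \<le> d" for \<tau>
  proof -
    have "D \<tau> \<le> D (max \<tau> c + 1)"
      by (rule monoD[OF mono_D]) simp
    also have "\<dots> = d"
      using above[of "max \<tau> c + 1"] by simp
    finally show ?thesis .
  qed
  then show ?thesis
    by auto
qed

lemma finite_values: "finite (D ` R)"
  using values_subset finite_subset by blast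

lemma card_values: "card (D ` R) = num_intervals + 1" "1 \<le> num_intervals" "num_intervals \<le> d"
proof -
  have "c + 1 \<in> R" "D (c + 1) = d" "- c - 1 \<in> R" "D (- c - 1) = 0"
    using above[of "c + 1"] below[of "- c - 1"] by auto
  then have "{0, d} \<subseteq> D ` R"
    by (metis empty_subsetI image_eqI insert_subset)
  then have "card {0, d} \<le> card (D ` R)"
    by (rule card_mono[OF finite_values])
  then have "2 \<le> card (D ` R)"
    using d_pos by simp
  moreover have "card (D ` R) \<le> d + 1"
    using card_mono[OF finite_atMost values_subset] by simp
  ultimately show "card (D ` R) = num_intervals + 1" "1 \<le> num_intervals" "num_intervals \<le> d"
    unfolding num_intervals_def by auto
qed

lemma levelset_nonempty:
  assumes "j \<le> num_intervals"
  shows "levelset j \<noteq> {}"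
proof -
  have "enumerate (D ` R) j \<in> D ` R"
    using finite_enumerate_in_set[OF finite_values] assms card_values(1) by simp
  then show ?thesis
    unfolding levelset_def by auto
qed

lemma in_levelset:
  assumes "\<tau> \<in> R"
  obtains j where "j \<le> num_intervals" "\<tau> \<in> levelset j"
proof -
  obtain j where "j < card (D ` R)" "enumerate (D ` R) j = D \<tau>"
    using finite_enumerate_Ex[OF finite_values] assms by blast
  then show ?thesis
    using that[of j] assms card_values(1) unfolding levelset_def by simp
qed

lemma levelset_less:
  assumes "i < j" "j \<le> num_intervals" "\<sigma> \<in> levelset i" "\<sigma>' \<in> levelset j"
  shows "\<sigma> < \<sigma>'"
proof (rule ccontr)
  assume "\<not> \<sigma> < \<sigma>'"
  then have "D \<sigma>' \<le> D \<sigma>"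
    using monoD[OF mono_D] by simp
  moreover have "enumerate (D ` R) i < enumerate (D ` R) j"
    using assms(1,2) card_values(1) finite_values by simp
  ultimately show False
    using assms(3,4) unfolding levelset_def by simp
qed

lemma levelset_open:
  assumes "\<sigma> \<in> levelset j"
  obtains e where "0 < e" "\<sigma> - e \<in> levelset j" "\<sigma> + e \<in> levelset j"
proof -
  obtain e where "0 < e" and e: "\<forall>\<tau>. \<bar>\<tau> - \<sigma>\<bar> < e \<longrightarrow> \<tau> \<in> R \<and> D \<tau> = D \<sigma>"
    using locally_const[of \<sigma>] assms unfolding levelset_def by blast
  have "\<sigma> - e / 2 \<in> R \<and> D (\<sigma> - e / 2) = D \<sigma>" "\<sigma> + e / 2 \<in> R \<and> D (\<sigma> + e / 2) = D \<sigma>"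
    using e[rule_format, of "\<sigma> - e / 2"] e[rule_format, of "\<sigma> + e / 2"] \<open>0 < e\<close> by simp_all
  then have "\<sigma> - e / 2 \<in> levelset j" "\<sigma> + e / 2 \<in> levelset j"
    using assms unfolding levelset_def by simp_all
  then show ?thesis
    using that[of "e / 2"] \<open>0 < e\<close> by simp
qed

lemma levelset_side:
  assumes "\<tau> \<notin> R"
  shows "levelset j \<subseteq> {..<\<tau>} \<or> levelset j \<subseteq> {\<tau><..}"
proof (rule ccontr)
  assume "\<not> ?thesis"
  then obtain \<sigma>1 \<sigma>2 where "\<sigma>1 \<in> levelset j" "\<tau> \<le> \<sigma>1" "\<sigma>2 \<in> levelset j" "\<sigma>2 \<le> \<tau>"
    unfolding subset_eq lessThan_iff greaterThan_iff by (meson not_less)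
  then show False
    using level_convex[of \<sigma>2 \<sigma>1 \<tau>] assms unfolding levelset_def by simp
qed

lemma bdd_above_levelset:
  assumes "j < num_intervals"
  shows "bdd_above (levelset j)"
proof -
  obtain \<sigma>' where "\<sigma>' \<in> levelset (Suc j)"
    using levelset_nonempty[of "Suc j"] assms by auto
  show ?thesis
  proof (rule bdd_aboveI)
    fix x assume "x \<in> levelset j"
    then show "x \<le> \<sigma>'"
      using levelset_less[of j "Suc j" x \<sigma>'] \<open>\<sigma>' \<in> levelset (Suc j)\<close> assms by simp
  qed
qed

lemma bdd_below_levelset:
  assumes "0 < j" "j \<le> num_intervals"
  shows "bdd_below (levelset j)"
proof -
  have "j - 1 \<le> num_intervals"
    using assms by simp
  then obtain \<sigma> where "\<sigma> \<in> levelset (j - 1)"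
    using levelset_nonempty by blast
  show ?thesis
  proof (rule bdd_belowI)
    fix x assume "x \<in> levelset j"
    then show "\<sigma> \<le> x"
      using levelset_less[of "j - 1" j \<sigma> x] \<open>\<sigma> \<in> levelset (j - 1)\<close> assms by simp
  qed
qed

definition lower :: "nat \<Rightarrow> real" where
  "lower i = Sup (levelset (i - 1))"

definition upper :: "nat \<Rightarrow> real" where
  "upper i = Inf (levelset i)"

lemma le_lower:
  assumes "j < i" "i \<le> num_intervals" "\<sigma> \<in> levelset j"
  shows "\<sigma> \<le> lower i"
proof -
  obtain \<sigma>' where \<sigma>': "\<sigma>' \<in> levelset (i - 1)" "\<sigma> \<le> \<sigma>'"
  proof (cases "j = i - 1")
    case True
    then show ?thesis
      using that assms(3) by blast
  next
    case False
    have "i - 1 \<le> num_intervals"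
      using assms(2) by simp
    then obtain \<sigma>' where "\<sigma>' \<in> levelset (i - 1)"
      using levelset_nonempty by blast
    moreover have "\<sigma> < \<sigma>'"
      using levelset_less[of j "i - 1" \<sigma> \<sigma>'] calculation False assms by simp
    ultimately show ?thesis
      using that by simp
  qed
  then show ?thesis
    unfolding lower_def using bdd_above_levelset[of "i - 1"] assms(1,2) by (intro cSup_upper2) auto
qed

lemma upper_le:
  assumes "0 < i" "i \<le> j" "j \<le> num_intervals" "\<sigma> \<in> levelset j"
  shows "upper i \<le> \<sigma>"
proof -
  obtain \<sigma>' where \<sigma>': "\<sigma>' \<in> levelset i" "\<sigma>' \<le> \<sigma>"
  proof (cases "j = i")
    case True
    then show ?thesis
      using that assms(4) by blast
  next
    case False
    have "i \<le> num_intervals"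
      using assms(2,3) by simp
    then obtain \<sigma>' where "\<sigma>' \<in> levelset i"
      using levelset_nonempty by blast
    moreover have "\<sigma>' < \<sigma>"
      using levelset_less[of i j \<sigma>' \<sigma>] calculation False assms by simp
    ultimately show ?thesis
      using that by simp
  qed
  then show ?thesis
    unfolding upper_def using bdd_below_levelset[of i] assms by (intro cInf_lower2) auto
qed

lemma lower_le_upper:
  assumes "0 < i" "i \<le> num_intervals"
  shows "lower i \<le> upper i"
  unfolding upper_def
proof (rule cInf_greatest[OF levelset_nonempty[OF assms(2)]])
  fix \<sigma>' assume "\<sigma>' \<in> levelset i"
  then have "\<sigma> \<le> \<sigma>'" if "\<sigma> \<in> levelset (i - 1)" for \<sigma>
    using levelset_less[of "i - 1" i \<sigma> \<sigma>'] that assms by simp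
  then show "lower i \<le> \<sigma>'"
    unfolding lower_def using assms levelset_nonempty[of "i - 1"] by (intro cSup_least) auto
qed

lemma upper_less_lower:
  assumes "0 < i" "i < num_intervals"
  shows "upper i < lower (Suc i)"
proof -
  obtain \<sigma> where "\<sigma> \<in> levelset i"
    using levelset_nonempty[of i] assms by auto
  then obtain e where "0 < e" "\<sigma> - e \<in> levelset i" "\<sigma> + e \<in> levelset i"
    by (rule levelset_open)
  then have "upper i \<le> \<sigma> - e" "\<sigma> + e \<le> lower (Suc i)"
    using assms by (auto intro: upper_le le_lower)
  then show ?thesis
    using \<open>0 < e\<close> by simp
qed

lemma complement_eq: "- R = (\<Union>i\<in>{1..num_intervals}. {lower i..upper i})"
proof (intro equalityI subsetI)
  fix \<tau> assume "\<tau> \<in> - R"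
  then have "\<tau> \<notin> R"
    by simp
  \<comment> \<open>the first level set above \<open>\<tau>\<close>; the one before it lies below \<open>\<tau>\<close>\<close>
  define i where "i = (LEAST i. levelset i \<subseteq> {\<tau><..})"
  have "max \<tau> c + 1 \<in> R"
    using above by simp
  then obtain j where j: "j \<le> num_intervals" "max \<tau> c + 1 \<in> levelset j"
    by (rule in_levelset)
  then have "\<not> levelset j \<subseteq> {..<\<tau>}"
    by (auto dest!: subsetD[of _ _ "max \<tau> c + 1"])
  then have "levelset j \<subseteq> {\<tau><..}"
    using levelset_side[OF \<open>\<tau> \<notin> R\<close>] by blast
  then have above_i: "levelset i \<subseteq> {\<tau><..}"
    unfolding i_def by (rule LeastI)
  have "i \<le> j"
    unfolding i_def by (rule Least_le) fact
  then have "i \<le> num_intervals"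
    using j(1) by simp
  have "0 \<in> D ` R"
    using below[of "- c - 1"] by (intro image_eqI[where x = "- c - 1"]) auto
  then have "enumerate (D ` R) 0 = 0"
    unfolding enumerate_0 by (rule Least_eq_0)
  then have "min \<tau> (- c) - 1 \<in> levelset 0"
    using below[of "min \<tau> (- c) - 1"] unfolding levelset_def by simp
  then have "\<not> levelset 0 \<subseteq> {\<tau><..}"
    by (auto dest!: subsetD[of _ _ "min \<tau> (- c) - 1"])
  then have "0 < i"
    using above_i by (cases "i = 0") auto
  then have "\<not> levelset (i - 1) \<subseteq> {\<tau><..}"
    unfolding i_def by (intro not_less_Least) simp
  then have below_i: "levelset (i - 1) \<subseteq> {..<\<tau>}"
    using levelset_side[OF \<open>\<tau> \<notin> R\<close>] by blast
  have "lower i \<le> \<tau>"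
    unfolding lower_def using below_i levelset_nonempty[of "i - 1"] \<open>i \<le> num_intervals\<close>
    by (intro cSup_least) (auto intro: less_imp_le)
  moreover have "\<tau> \<le> upper i"
    unfolding upper_def using above_i levelset_nonempty[of i] \<open>i \<le> num_intervals\<close>
    by (intro cInf_greatest) (auto intro: less_imp_le)
  ultimately show "\<tau> \<in> (\<Union>i\<in>{1..num_intervals}. {lower i..upper i})"
    using \<open>0 < i\<close> \<open>i \<le> num_intervals\<close> by (intro UN_I[of i]) auto
next
  fix \<tau> assume "\<tau> \<in> (\<Union>i\<in>{1..num_intervals}. {lower i..upper i})"
  then obtain i where i: "1 \<le> i" "i \<le> num_intervals" "lower i \<le> \<tau>" "\<tau> \<le> upper i"
    by auto
  show "\<tau> \<in> - R"
  proof
    assume "\<tau> \<in> R"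
    then obtain j where j: "j \<le> num_intervals" "\<tau> \<in> levelset j"
      by (rule in_levelset)
    then obtain e where "0 < e" "\<tau> - e \<in> levelset j" "\<tau> + e \<in> levelset j"
      by (meson levelset_open)
    show False
    proof (cases "j < i")
      case True
      then have "\<tau> + e \<le> lower i"
        using le_lower i(2) \<open>\<tau> + e \<in> levelset j\<close> by blast
      then show False
        using i(3) \<open>0 < e\<close> by simp
    next
      case False
      then have "upper i \<le> \<tau> - e"
        using upper_le[of i j "\<tau> - e"] i(1) j(1) \<open>\<tau> - e \<in> levelset j\<close> by simp
      then show False
        using i(4) \<open>0 < e\<close> by simp
    qed
  qed
qed

theorem spectrum_intervals:
  "\<exists>(r::nat) \<alpha> \<beta>. 1 \<le> r \<and> r \<le> d \<and> (\<forall>i\<in>{1..r}. \<alpha> i \<le> \<beta> i) \<and>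
     (\<forall>i\<in>{1..<r}. \<beta> i < \<alpha> (Suc i)) \<and> - R = (\<Union>i\<in>{1..r}. {\<alpha> i..\<beta> i})"
proof (rule exI[of _ num_intervals], rule exI[of _ lower], rule exI[of _ upper], intro conjI ballI)
  show "1 \<le> num_intervals" "num_intervals \<le> d"
    by (fact card_values)+
  show "lower i \<le> upper i" if "i \<in> {1..num_intervals}" for i
    using lower_le_upper that by simp
  show "upper i < lower (Suc i)" if "i \<in> {1..<num_intervals}" for i
    using upper_less_lower that by simp
qed (rule complement_eq)

end

section \<open>The resolvent and the spectrum\<close>

context poly_growth
begin

lemma poly_growth_weighted: "poly_growth (weighted \<tau> W) N K (b + \<bar>\<tau>\<bar>)"
proof (rule poly_growth.intro[OF cocycle_family_weighted[OF cocycle_family_axioms]], unfold_locales)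
  fix t s :: real and x :: "real^'n"
  assume ts: "1 \<le> s" "s \<le> t"
  then have "1 \<le> t / s"
    by simp
  have "N t (weighted \<tau> W t s *v x) = (t / s) powr (- \<tau>) * N t (W t s *v x)"
    using ts by (simp add: weighted_apply is_norm_scaleR[OF is_norm_N])
  also have "\<dots> \<le> K * (t / s) powr (b + \<bar>\<tau>\<bar>) * N s x"
    using ts K_pos N_nonneg \<open>1 \<le> t / s\<close> by (intro powr_bound_rescale[OF growth_fwd]) auto
  finally show "N t (weighted \<tau> W t s *v x) \<le> K * (t / s) powr (b + \<bar>\<tau>\<bar>) * N s x" .
  have "N s (weighted \<tau> W s t *v x) = (t / s) powr \<tau> * N s (W s t *v x)"
    using ts by (simp add: weighted_apply is_norm_scaleR[OF is_norm_N] powr_divide powr_minus_divide)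
  also have "\<dots> \<le> K * (t / s) powr (b + \<bar>\<tau>\<bar>) * N t x"
    using ts K_pos N_nonneg \<open>1 \<le> t / s\<close> by (intro powr_bound_rescale[OF growth_bwd]) auto
  finally show "N s (weighted \<tau> W s t *v x) \<le> K * (t / s) powr (b + \<bar>\<tau>\<bar>) * N t x" .
qed (use is_norm_N K_pos b_nonneg in auto)

interpretation wt: poly_growth "weighted \<tau> W" N K "b + \<bar>\<tau>\<bar>" for \<tau>
  by (rule poly_growth_weighted)

lemma norm_weighted_shift:
  "1 \<le> r \<Longrightarrow> 0 < t \<Longrightarrow> 0 < s \<Longrightarrow>
    N r (weighted \<tau>' W t s *v x) = (t / s) powr (\<tau> - \<tau>') * N r (weighted \<tau> W t s *v x)"
  by (simp add: weighted_apply is_norm_scaleR[OF is_norm_N] mult.assoc flip: powr_add)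

lemma bounded_orbits_mono:
  assumes "\<tau>1 \<le> \<tau>2"
  shows "wt.bounded_orbits \<tau>1 \<subseteq> wt.bounded_orbits \<tau>2"
proof
  fix x assume "x \<in> wt.bounded_orbits \<tau>1"
  then obtain B where B: "\<And>t. 1 \<le> t \<Longrightarrow> N t (weighted \<tau>1 W t 1 *v x) \<le> B"
    unfolding wt.bounded_orbits_def by blast
  have "N t (weighted \<tau>2 W t 1 *v x) \<le> B" if "1 \<le> t" for t
  proof -
    have "N t (weighted \<tau>2 W t 1 *v x) = t powr (\<tau>1 - \<tau>2) * N t (weighted \<tau>1 W t 1 *v x)"
      using norm_weighted_shift[of t t 1] that by simp
    also have "\<dots> \<le> N t (weighted \<tau>1 W t 1 *v x)"
      using that assms N_nonneg powr_mono[of "\<tau>1 - \<tau>2" 0 t] by (intro mult_left_le_one_le) auto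
    finally show ?thesis
      using B[OF that] by simp
  qed
  then show "x \<in> wt.bounded_orbits \<tau>2"
    unfolding wt.bounded_orbits_def by blast
qed

lemma poly_dichotomy_perturb:
  assumes dich: "poly_dichotomy (weighted \<tau> W) N P C l" and "\<bar>\<tau>' - \<tau>\<bar> \<le> l / 2"
  shows "poly_dichotomy (weighted \<tau>' W) N P C (l / 2)"
proof -
  note d = poly_dichotomyD[OF dich]
  have close: "\<tau> - \<tau>' \<le> l / 2" "\<tau>' - \<tau> \<le> l / 2"
    using assms(2) unfolding abs_le_iff by linarith+
  show ?thesis
  proof (rule poly_dichotomyI)
    show "0 < C" "0 < l / 2"
      using d by auto
    show "P t ** P t = P t" if "1 \<le> t" for t
      using d(3) that .
    show "P t ** weighted \<tau>' W t s = weighted \<tau>' W t s ** P s" if "1 \<le> t" "1 \<le> s" for t s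
      using d(4)[OF that] that by (simp add: weighted_commute_iff)
  next
    fix t s :: real and x :: "real^'n"
    assume ts: "1 \<le> s" "s \<le> t"
    have "N t (weighted \<tau>' W t s *v (P s *v x)) = (t / s) powr (\<tau> - \<tau>') * N t (weighted \<tau> W t s *v (P s *v x))"
      using norm_weighted_shift[where r = t and t = t and s = s and \<tau>' = \<tau>' and \<tau> = \<tau>] ts by simp
    also have "\<dots> \<le> C * (t / s) powr (- (l / 2)) * N s x"
      using close ts d(1) N_nonneg by (intro powr_bound_rescale[OF d(5)]) auto
    finally show "N t (weighted \<tau>' W t s *v (P s *v x)) \<le> C * (t / s) powr (- (l / 2)) * N s x" .
  next
    fix t s :: real and x :: "real^'n"
    assume ts: "1 \<le> s" "s \<le> t"
    have "N s (weighted \<tau>' W s t *v ((mat 1 - P t) *v x))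
        = (t / s) powr (\<tau>' - \<tau>) * N s (weighted \<tau> W s t *v ((mat 1 - P t) *v x))"
      using norm_weighted_shift[where r = s and t = s and s = t and \<tau>' = \<tau>' and \<tau> = \<tau>] ts
        powr_divide_swap[of t s "\<tau> - \<tau>'"] by simp
    also have "\<dots> \<le> C * (t / s) powr (- (l / 2)) * N t x"
      using close ts d(1) N_nonneg by (intro powr_bound_rescale[OF d(6)]) auto
    finally show "N s (weighted \<tau>' W s t *v ((mat 1 - P t) *v x)) \<le> C * (t / s) powr (- (l / 2)) * N t x" .
  qed
qed

text \<open>Equal stable spaces give \<open>P1 s ** P2 s = P2 s\<close>, so the range of \<open>P2\<close> decays at the rate
  of \<open>\<tau>1\<close> and its kernel expands at the rate of \<open>\<tau>2\<close>.\<close>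

lemma poly_dichotomy_between:
  assumes dich1: "poly_dichotomy (weighted \<tau>1 W) N P1 C1 l1"
    and dich2: "poly_dichotomy (weighted \<tau>2 W) N P2 C2 l2"
    and ranges: "range (\<lambda>y. P1 1 *v y) = range (\<lambda>y. P2 1 *v y)"
    and "\<tau>1 \<le> \<tau>" "\<tau> \<le> \<tau>2"
  shows "poly_dichotomy (weighted \<tau> W) N P2 (C1 * C2 + C2) (min l1 l2)"
proof -
  note d1 = poly_dichotomyD[OF dich1] and d2 = poly_dichotomyD[OF dich2]
  have comm1: "P1 t ** W t s = W t s ** P1 s" and comm2: "P2 t ** W t s = W t s ** P2 s"
    if "1 \<le> t" "1 \<le> s" for t s
    using d1(4)[OF that] d2(4)[OF that] that by (simp_all add: weighted_commute_iff)
  have P12: "P1 s ** P2 s = P2 s" if "1 \<le> s" for s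
    using commuting_absorb[OF comm1 comm2 d1(3)[of 1] _ that] ranges by simp
  have C: "C1 * C2 \<le> C1 * C2 + C2" "C2 \<le> C1 * C2 + C2" "0 \<le> C1 * C2"
    using d1(1) d2(1) by auto
  show ?thesis
  proof (rule poly_dichotomyI)
    show "0 < C1 * C2 + C2" "0 < min l1 l2"
      using d1(1,2) d2(1,2) by (auto intro: add_nonneg_pos)
    show "P2 t ** P2 t = P2 t" if "1 \<le> t" for t
      using d2(3) that .
    show "P2 t ** weighted \<tau> W t s = weighted \<tau> W t s ** P2 s" if "1 \<le> t" "1 \<le> s" for t s
      using comm2[OF that] that by (simp add: weighted_commute_iff)
  next
    fix t s :: real and x :: "real^'n"
    assume ts: "1 \<le> s" "s \<le> t"
    have "N s (P2 s *v x) \<le> C2 * N s x"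
      using d2(5)[of s s x] ts wt.cocycle_id[of s \<tau>2] by simp
    then have "C1 * (t / s) powr (- l1) * N s (P2 s *v x) \<le> C1 * (t / s) powr (- l1) * (C2 * N s x)"
      using d1(1) by (intro mult_left_mono) auto
    then have "N t (weighted \<tau>1 W t s *v (P1 s *v (P2 s *v x))) \<le> C1 * C2 * (t / s) powr (- l1) * N s x"
      using d1(5)[OF ts, of "P2 s *v x"] by (simp add: mult_ac)
    moreover have "P1 s *v (P2 s *v x) = P2 s *v x"
      using P12[OF ts(1)] by (simp add: matrix_vector_mul_assoc)
    ultimately have "N t (weighted \<tau>1 W t s *v (P2 s *v x)) \<le> C1 * C2 * (t / s) powr (- l1) * N s x"
      by simp
    then have "(t / s) powr (\<tau>1 - \<tau>) * N t (weighted \<tau>1 W t s *v (P2 s *v x))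
        \<le> (C1 * C2 + C2) * (t / s) powr (- min l1 l2) * N s x"
      using assms(4) ts C N_nonneg by (intro powr_bound_rescale[where C = "C1 * C2"]) auto
    then show "N t (weighted \<tau> W t s *v (P2 s *v x)) \<le> (C1 * C2 + C2) * (t / s) powr (- min l1 l2) * N s x"
      using norm_weighted_shift[where r = t and t = t and s = s and \<tau>' = \<tau> and \<tau> = \<tau>1] ts by simp
  next
    fix t s :: real and x :: "real^'n"
    assume ts: "1 \<le> s" "s \<le> t"
    have "(t / s) powr (\<tau> - \<tau>2) * N s (weighted \<tau>2 W s t *v ((mat 1 - P2 t) *v x))
        \<le> (C1 * C2 + C2) * (t / s) powr (- min l1 l2) * N t x"
      using assms(5) ts C d2(1) N_nonneg by (intro powr_bound_rescale[OF d2(6)]) auto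
    then show "N s (weighted \<tau> W s t *v ((mat 1 - P2 t) *v x))
        \<le> (C1 * C2 + C2) * (t / s) powr (- min l1 l2) * N t x"
      using norm_weighted_shift[where r = s and t = s and s = t and \<tau>' = \<tau> and \<tau> = \<tau>2] ts
        powr_divide_swap[of t s "\<tau>2 - \<tau>"] by simp
  qed
qed

lemma poly_dichotomy_above:
  assumes "b < \<tau>"
  shows "poly_dichotomy (weighted \<tau> W) N (\<lambda>_. mat 1) K (\<tau> - b)"
proof (rule poly_dichotomyI)
  fix t s :: real and x :: "real^'n"
  assume ts: "1 \<le> s" "s \<le> t"
  have "(t / s) powr (- \<tau>) * N t (W t s *v x) \<le> K * (t / s) powr (- (\<tau> - b)) * N s x"
    using ts K_pos N_nonneg by (intro powr_bound_rescale[OF growth_fwd]) auto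
  then show "N t (weighted \<tau> W t s *v (mat 1 *v x)) \<le> K * (t / s) powr (- (\<tau> - b)) * N s x"
    using ts by (simp add: weighted_apply is_norm_scaleR[OF is_norm_N])
  show "N s (weighted \<tau> W s t *v ((mat 1 - mat 1) *v x)) \<le> K * (t / s) powr (- (\<tau> - b)) * N t x"
    using ts K_pos N_nonneg[of t x] is_norm_zero[OF is_norm_N[of s]] by simp
qed (use K_pos assms in auto)

lemma poly_dichotomy_below:
  assumes "\<tau> < - b"
  shows "poly_dichotomy (weighted \<tau> W) N (\<lambda>_. 0) K (- b - \<tau>)"
proof (rule poly_dichotomyI)
  fix t s :: real and x :: "real^'n"
  assume ts: "1 \<le> s" "s \<le> t"
  show "N t (weighted \<tau> W t s *v (0 *v x)) \<le> K * (t / s) powr (- (- b - \<tau>)) * N s x"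
    using ts K_pos N_nonneg[of s x] is_norm_zero[OF is_norm_N[of t]] by simp
  have "(t / s) powr \<tau> * N s (W s t *v x) \<le> K * (t / s) powr (- (- b - \<tau>)) * N t x"
    using ts K_pos N_nonneg by (intro powr_bound_rescale[OF growth_bwd]) auto
  then show "N s (weighted \<tau> W s t *v ((mat 1 - 0) *v x)) \<le> K * (t / s) powr (- (- b - \<tau>)) * N t x"
    using ts powr_divide_swap[of t s "- \<tau>"] by (simp add: weighted_apply is_norm_scaleR[OF is_norm_N])
qed (use K_pos assms in auto)

definition resolvent :: "real set" where
  "resolvent = {\<tau>. spd_family (weighted \<tau> W) N}"

lemma resolvent_iff: "\<tau> \<in> resolvent \<longleftrightarrow> (\<exists>P C l. poly_dichotomy (weighted \<tau> W) N P C l)"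
  unfolding resolvent_def using wt.spd_family_iff_poly_dichotomy by simp

lemma resolvent_iff_seq_spd:
  "\<tau> \<in> resolvent \<longleftrightarrow>
    seq_spd (\<lambda>n. ((real n + 1) / real n) powr (- \<tau>) *\<^sub>R W (real n + 1) (real n)) (\<lambda>n. N (real n))"
proof -
  have "wt.sample \<tau> = (\<lambda>n. ((real n + 1) / real n) powr (- \<tau>) *\<^sub>R W (real n + 1) (real n))"
    by (simp add: fun_eq_iff wt.sample_def weighted_def)
  then show ?thesis
    unfolding resolvent_def using wt.spd_family_iff_seq_spd by simp
qed

lemma resolvent_locally_const:
  assumes "\<tau> \<in> resolvent"
  shows "\<exists>e>0. \<forall>\<sigma>. \<bar>\<sigma> - \<tau>\<bar> < e \<longrightarrow>
    \<sigma> \<in> resolvent \<and> dim (wt.bounded_orbits \<sigma>) = dim (wt.bounded_orbits \<tau>)"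
proof -
  obtain P C l where dich: "poly_dichotomy (weighted \<tau> W) N P C l"
    using assms unfolding resolvent_iff by blast
  have "\<sigma> \<in> resolvent \<and> dim (wt.bounded_orbits \<sigma>) = dim (wt.bounded_orbits \<tau>)"
    if "\<bar>\<sigma> - \<tau>\<bar> < l / 2" for \<sigma>
  proof -
    have dich': "poly_dichotomy (weighted \<sigma> W) N P C (l / 2)"
      using poly_dichotomy_perturb[OF dich] that by simp
    then have "\<sigma> \<in> resolvent"
      unfolding resolvent_iff by blast
    moreover have "wt.bounded_orbits \<sigma> = wt.bounded_orbits \<tau>"
      unfolding wt.bounded_orbits_eq_range[OF dich] wt.bounded_orbits_eq_range[OF dich'] ..
    ultimately show ?thesis
      by simp
  qed
  moreover have "0 < l / 2"
    using poly_dichotomyD(2)[OF dich] by simp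
  ultimately show ?thesis
    by blast
qed

lemma resolvent_between:
  assumes "\<tau>1 \<in> resolvent" "\<tau>2 \<in> resolvent" "\<tau>1 \<le> \<tau>" "\<tau> \<le> \<tau>2"
    and dims: "dim (wt.bounded_orbits \<tau>1) = dim (wt.bounded_orbits \<tau>2)"
  shows "\<tau> \<in> resolvent"
proof -
  obtain P1 C1 l1 P2 C2 l2 where dich1: "poly_dichotomy (weighted \<tau>1 W) N P1 C1 l1"
    and dich2: "poly_dichotomy (weighted \<tau>2 W) N P2 C2 l2"
    using assms(1,2) unfolding resolvent_iff by blast
  have "wt.bounded_orbits \<tau>1 = wt.bounded_orbits \<tau>2"
  proof (rule subspace_dim_equal)
    show "subspace (wt.bounded_orbits \<tau>1)" "subspace (wt.bounded_orbits \<tau>2)"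
      unfolding wt.bounded_orbits_eq_range[OF dich1] wt.bounded_orbits_eq_range[OF dich2]
      by (intro linear_subspace_image matrix_vector_mul_linear subspace_UNIV)+
    show "wt.bounded_orbits \<tau>1 \<subseteq> wt.bounded_orbits \<tau>2"
      using bounded_orbits_mono assms(3,4) by simp
  qed (use dims in simp)
  then have "range (\<lambda>y. P1 1 *v y) = range (\<lambda>y. P2 1 *v y)"
    unfolding wt.bounded_orbits_eq_range[OF dich1] wt.bounded_orbits_eq_range[OF dich2] .
  then show "\<tau> \<in> resolvent"
    using poly_dichotomy_between[OF dich1 dich2] assms(3,4) resolvent_iff by blast
qed

lemma spectral_levels_resolvent:
  "spectral_levels resolvent (\<lambda>\<tau>. dim (wt.bounded_orbits \<tau>)) CARD('n) b"
proof
  show "mono (\<lambda>\<tau>. dim (wt.bounded_orbits \<tau>))"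
    by (intro monoI dim_subset bounded_orbits_mono)
next
  fix \<tau> assume "b < \<tau>"
  then have dich: "poly_dichotomy (weighted \<tau> W) N (\<lambda>_. mat 1) K (\<tau> - b)"
    by (rule poly_dichotomy_above)
  moreover have "wt.bounded_orbits \<tau> = UNIV"
    unfolding wt.bounded_orbits_eq_range[OF dich] by simp
  ultimately show "\<tau> \<in> resolvent \<and> dim (wt.bounded_orbits \<tau>) = CARD('n)"
    unfolding resolvent_iff by auto
next
  fix \<tau> assume "\<tau> < - b"
  then have dich: "poly_dichotomy (weighted \<tau> W) N (\<lambda>_. 0) K (- b - \<tau>)"
    by (rule poly_dichotomy_below)
  moreover have "wt.bounded_orbits \<tau> = {0}"
    unfolding wt.bounded_orbits_eq_range[OF dich] by auto
  ultimately show "\<tau> \<in> resolvent \<and> dim (wt.bounded_orbits \<tau>) = 0"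
    unfolding resolvent_iff by auto
qed (auto intro: resolvent_locally_const resolvent_between)

end

theorem corollary5p1:
  fixes A :: "real \<Rightarrow> real^'d^'d"
    and T :: "real \<Rightarrow> real \<Rightarrow> real^'d^'d"
    and N :: "real \<Rightarrow> real^'d \<Rightarrow> real"
    and K a :: real
  assumes contA: "continuous_on {1..} A"
    and evol: "evol_family A T"
    and norms: "\<forall>t\<ge>1. is_norm (N t)"
    and Kpos: "K > 0" and apos: "a > 0"
    and growth: "\<forall>t s x. 1 \<le> s \<and> s \<le> t \<longrightarrow>
        N t (T t s *v x) \<le> K * (t / s) powr a * N s x \<and>
        N s (T s t *v x) \<le> K * (t / s) powr a * N t x"
  shows "ode_spectrum A N = seq_spectrum (\<lambda>n. T (real n + 1) (real n)) (\<lambda>n. N (real n)) \<and>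
    (\<exists>(r::nat) lo hi. 1 \<le> r \<and> r \<le> CARD('d) \<and> 0 < lo 1 \<and>
       (\<forall>i\<in>{1..r}. lo i \<le> hi i) \<and> (\<forall>i\<in>{1..<r}. hi i < lo (Suc i)) \<and>
       ode_spectrum A N = (\<Union>i\<in>{1..r}. {ln (lo i) / ln 2 .. ln (hi i) / ln 2}))"
proof -
  interpret poly_growth T N K a
    using evol_family_mult[OF contA evol] evol Kpos apos norms growth
    by unfold_locales (auto simp: evol_family_def)
  have ode: "ode_spectrum A N = - resolvent"
    unfolding ode_spectrum_def resolvent_def using ode_spd_iff_weighted[OF contA evol] by auto
  have seq: "seq_spectrum (\<lambda>n. T (real n + 1) (real n)) (\<lambda>n. N (real n)) = - resolvent"
    unfolding seq_spectrum_def using resolvent_iff_seq_spd by auto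
  obtain r \<alpha> \<beta> where intervals: "1 \<le> r" "r \<le> CARD('d)" "\<forall>i\<in>{1..r}. \<alpha> i \<le> \<beta> i"
    "\<forall>i\<in>{1..<r}. \<beta> i < \<alpha> (Suc i)" "- resolvent = (\<Union>i\<in>{1..r}. {\<alpha> i..\<beta> i})"
    using spectral_levels.spectrum_intervals[OF spectral_levels_resolvent] by blast
  show ?thesis
    unfolding ode seq
    by (rule conjI[OF refl], rule exI[of _ r], rule exI[of _ "\<lambda>i. 2 powr \<alpha> i"],
        rule exI[of _ "\<lambda>i. 2 powr \<beta> i"])
       (use intervals in \<open>simp add: ln_powr\<close>)
qed

end
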